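(* For $1\le p\le n$ let $M_{np}=\chi_n(\pi,p)$ where $\pi$ is uniform on $\mathfrak S_n$, and $\phi_{np}(u)=\sum_{l\ge0}\mathbb P(M_{np}=l)u^l$. Then $$\phi_{np}(u)=\frac{p}{n}\phi_{pp}(u)+\Bigl(1-\frac pn\Bigr)u,\qquad \phi_{nn}(u)=\frac un\Bigl[1+\sum_{p=1}^{n-1}\phi_{n-1,p}(u)\Bigr]\ (n\ge2),$$ and explicitly $$\phi_{np}(u)=\frac{n-p+1}{n}\,u+\frac pn\,\frac{u^2}{2-u}\Bigl[1-\frac{u(u+1)\cdots(u+p-2)}{p!}\Bigr],$$ where the product $u(u+1)\cdots(u+p-2)$ is empty (equal to $1$) when $p=1$.
   Context: $[n]=\{1,\dots,n\}$, $\mathfrak S_n$ the symmetric group on $[n]$, right action $i\pi$, products composed left to right; $\tau(i,j)$ the transposition exchanging $i,j$ ($\tau(n,n)$ the identity). For $\pi\in\mathfrak S_n$ let $q(\pi)=n\pi^{-1}$, and for $n\ge2$ let $\downarrow\pi\in\mathfrak S_{n-1}$ be the restriction to $[n-1]$ of $\tau(n,q(\pi))\pi$. The "number of moves" function $\chi_n(\pi,p)$, $\pi\in\mathfrak S_n$, $p\in[n]$, is defined recursively: $\chi_1(\mathrm{id},1)=1$; for $n\ge2$, with $q=q(\pi)$: $\chi_n(\pi,p)=\chi_{n-1}(\downarrow\pi,p)$ if $p\ne n,p\ne q$; $=1+\chi_{n-1}(\downarrow\pi,q)$ if $p=n\ne q$; $=1$ if $p=q\ne n$; $=1$ if $p=q=n$.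 *)

theory Defs
  imports "HOL-Combinatorics.Combinatorics" Complex_Main
begin

text \<open>Right action i pi is written pi i; the left-to-right product sigma pi (first sigma, then pi)
  is the function composition pi o sigma.\<close>

definition Perms :: "nat \<Rightarrow> (nat \<Rightarrow> nat) set" where
  "Perms n = {\<pi>. \<pi> permutes {1..n}}"

definition qpos :: "nat \<Rightarrow> (nat \<Rightarrow> nat) \<Rightarrow> nat" where
  "qpos n \<pi> = inv \<pi> n"

text \<open>down pi: the product tau(n,q(pi)) pi, which fixes n, hence restricts to a permutation
  of [n-1] (as a function it is the identity outside {1..n-1}).\<close>
definition down :: "nat \<Rightarrow> (nat \<Rightarrow> nat) \<Rightarrow> (nat \<Rightarrow> nat)" where
  "down n \<pi> = \<pi> \<circ> Transposition.transpose n (qpos n \<pi>)"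

fun chi :: "nat \<Rightarrow> (nat \<Rightarrow> nat) \<Rightarrow> nat \<Rightarrow> nat" where
  "chi 0 \<pi> p = 0"
| "chi (Suc 0) \<pi> p = 1"
| "chi (Suc (Suc m)) \<pi> p =
    (let n = Suc (Suc m); q = qpos n \<pi> in
     if p \<noteq> n \<and> p \<noteq> q then chi (Suc m) (down n \<pi>) p
     else if p = n \<and> n \<noteq> q then 1 + chi (Suc m) (down n \<pi>) q
     else 1)"

definition probM :: "nat \<Rightarrow> nat \<Rightarrow> nat \<Rightarrow> real" where
  "probM n p l = real (card {\<pi> \<in> Perms n. chi n \<pi> p = l}) / fact n"

text \<open>Probability generating function: sum over l >= 0 of P(M_np = l) u^l; all terms with
  l outside the (finite) range of M_np vanish, so the sum is over that range.\<close>
definition phi :: "nat \<Rightarrow> nat \<Rightarrow> real \<Rightarrow> real" where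
  "phi n p u = (\<Sum>l \<in> (\<lambda>\<pi>. chi n \<pi> p) ` Perms n. probM n p l * u ^ l)"

end

theory Submission
  imports Defs
begin

(*
  Every pi in S_n factors uniquely as tau(n,q) sigma with q = q(pi) and sigma = down pi in
  S_(n-1), so a sum over S_n splits into a sum over S_(n-1) and over q in [n], and the recursion
  for chi becomes a recursion for the generating sums.  For p < n the position p is affected only
  when q = p, which costs exactly one move; hence n phi_np = u + (n-1) phi_(n-1)p, which
  telescopes to the first identity.  For p = n every q < n adds one move to chi_(n-1)(sigma, q),
  which is the second identity.  The closed form follows by strong induction along the diagonal:
  the sum over p in the second identity is evaluated with the hockey-stick identity
  sum_(k<=m) (u)_k / k! = (u+1)_m / m! for rising factorials, and the denominator 2 - u enters
  through u (u + u^2/(2-u)) = 2 u^2/(2-u).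
*)

lemma finite_Perms: "finite (Perms n)"
  unfolding Perms_def by (rule finite_permutations) simp

lemma card_Perms: "card (Perms n) = fact n"
  unfolding Perms_def by (rule card_permutations) auto

lemma qpos_compose_transpose:
  assumes "\<sigma> permutes {1..m}" "q \<in> {1..Suc m}"
  shows "qpos (Suc m) (\<sigma> \<circ> transpose (Suc m) q) = q"
proof -
  have perm: "\<sigma> \<circ> transpose (Suc m) q permutes {1..Suc m}"
    using assms by (intro permutes_compose permutes_swap_id permutes_subset[OF assms(1)]) auto
  have "\<sigma> (Suc m) = Suc m"
    using assms(1) by (rule permutes_not_in) simp
  then have "(\<sigma> \<circ> transpose (Suc m) q) q = Suc m"
    by simp
  then show ?thesis
    unfolding qpos_def using permutes_inv_eq[OF perm] by blast
qed

lemma down_compose_transpose: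
  assumes "\<sigma> permutes {1..m}" "q \<in> {1..Suc m}"
  shows "down (Suc m) (\<sigma> \<circ> transpose (Suc m) q) = \<sigma>"
  unfolding down_def qpos_compose_transpose[OF assms] by (rule ext) simp

lemma qpos_mem:
  assumes "\<pi> permutes {1..Suc m}"
  shows "qpos (Suc m) \<pi> \<in> {1..Suc m}"
  unfolding qpos_def using permutes_in_image[OF permutes_inv[OF assms], of "Suc m"] by simp

lemma down_permutes:
  assumes "\<pi> permutes {1..Suc m}"
  shows "down (Suc m) \<pi> permutes {1..m}"
proof -
  have perm: "down (Suc m) \<pi> permutes {1..Suc m}"
    unfolding down_def using qpos_mem[OF assms]
    by (intro permutes_compose[OF permutes_swap_id assms]) auto
  have "\<pi> (inv \<pi> (Suc m)) = Suc m"
    using permutes_inverses(1)[OF assms] by simp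
  then have "down (Suc m) \<pi> (Suc m) = Suc m"
    unfolding down_def qpos_def by simp
  with perm show ?thesis
    by (intro permutes_superset[OF perm]) (auto simp: le_Suc_eq)
qed

lemma down_compose_transpose_qpos: "down n \<pi> \<circ> transpose n (qpos n \<pi>) = \<pi>"
  unfolding down_def by (rule ext) simp

lemma bij_betw_compose_transpose:
  "bij_betw (\<lambda>(\<sigma>, q). \<sigma> \<circ> transpose (Suc m) q) (Perms m \<times> {1..Suc m}) (Perms (Suc m))"
proof -
  let ?f = "\<lambda>(\<sigma>, q). \<sigma> \<circ> transpose (Suc m) q"
  let ?g = "\<lambda>\<pi>. (down (Suc m) \<pi>, qpos (Suc m) \<pi>)"
  have "\<forall>x \<in> Perms m \<times> {1..Suc m}. ?g (?f x) = x"
    using qpos_compose_transpose down_compose_transpose unfolding Perms_def by auto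
  moreover have "\<forall>\<pi> \<in> Perms (Suc m). ?f (?g \<pi>) = \<pi>"
    using down_compose_transpose_qpos by auto
  moreover have "?f ` (Perms m \<times> {1..Suc m}) \<subseteq> Perms (Suc m)"
    unfolding Perms_def by (auto intro!: permutes_compose[OF permutes_swap_id permutes_subset])
  moreover have "?g ` Perms (Suc m) \<subseteq> Perms m \<times> {1..Suc m}"
    unfolding Perms_def using qpos_mem down_permutes by auto
  ultimately show ?thesis
    by (rule bij_betw_byWitness)
qed

lemma sum_Perms_Suc:
  "sum f (Perms (Suc m)) = (\<Sum>\<sigma>\<in>Perms m. \<Sum>q = 1..Suc m. f (\<sigma> \<circ> transpose (Suc m) q))"
  unfolding sum.reindex_bij_betw[OF bij_betw_compose_transpose, symmetric] sum.cartesian_product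
  by (simp add: case_prod_beta)

lemma chi_Suc_Suc_compose_transpose:
  assumes "\<sigma> permutes {1..Suc m}" "q \<in> {1..Suc (Suc m)}"
  shows "chi (Suc (Suc m)) (\<sigma> \<circ> transpose (Suc (Suc m)) q) p =
     (if p \<noteq> Suc (Suc m) \<and> p \<noteq> q then chi (Suc m) \<sigma> p
      else if p = Suc (Suc m) \<and> q \<noteq> Suc (Suc m) then 1 + chi (Suc m) \<sigma> q
      else 1)"
  using qpos_compose_transpose[OF assms] down_compose_transpose[OF assms]
  by (auto simp: Let_def)

definition chi_gf :: "nat \<Rightarrow> nat \<Rightarrow> real \<Rightarrow> real" where
  "chi_gf n p u = (\<Sum>\<pi>\<in>Perms n. u ^ chi n \<pi> p)"

lemma phi_eq_chi_gf: "phi n p u = chi_gf n p u / fact n"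
proof -
  have "phi n p u * fact n
      = (\<Sum>l \<in> (\<lambda>\<pi>. chi n \<pi> p) ` Perms n. \<Sum>\<pi> \<in> {\<pi> \<in> Perms n. chi n \<pi> p = l}. u ^ chi n \<pi> p)"
    unfolding phi_def probM_def sum_distrib_right by (intro sum.cong) auto
  also have "\<dots> = chi_gf n p u"
    unfolding chi_gf_def by (rule sum.image_gen[OF finite_Perms, symmetric])
  finally show ?thesis
    by (simp add: field_simps)
qed

lemma chi_gf_Suc_Suc_off_diag:
  assumes "1 \<le> p" "p \<le> Suc m"
  shows "chi_gf (Suc (Suc m)) p u = fact (Suc m) * u + real (Suc m) * chi_gf (Suc m) p u"
proof -
  have "chi_gf (Suc (Suc m)) p u
      = (\<Sum>\<sigma>\<in>Perms (Suc m). \<Sum>q = 1..Suc (Suc m). if q = p then u else u ^ chi (Suc m) \<sigma> p)"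
    unfolding chi_gf_def sum_Perms_Suc[of _ "Suc m"] using assms
    by (intro sum.cong refl)
      (auto simp: Perms_def chi_Suc_Suc_compose_transpose simp del: chi.simps)
  also have "\<dots> = (\<Sum>\<sigma>\<in>Perms (Suc m). u + real (Suc m) * u ^ chi (Suc m) \<sigma> p)"
    using assms by (simp add: sum.delta_remove del: sum.cl_ivl_Suc)
  also have "\<dots> = fact (Suc m) * u + real (Suc m) * chi_gf (Suc m) p u"
    by (simp add: chi_gf_def sum.distrib sum_distrib_left card_Perms algebra_simps)
  finally show ?thesis .
qed

lemma chi_gf_Suc_Suc_diag:
  "chi_gf (Suc (Suc m)) (Suc (Suc m)) u = fact (Suc m) * u + u * (\<Sum>q = 1..Suc m. chi_gf (Suc m) q u)"
proof -
  have "chi_gf (Suc (Suc m)) (Suc (Suc m)) u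
      = (\<Sum>\<sigma>\<in>Perms (Suc m). \<Sum>q = 1..Suc (Suc m).
           if q = Suc (Suc m) then u else u * u ^ chi (Suc m) \<sigma> q)"
    unfolding chi_gf_def sum_Perms_Suc[of _ "Suc m"]
    by (intro sum.cong refl)
      (auto simp: Perms_def chi_Suc_Suc_compose_transpose simp del: chi.simps)
  also have "\<dots> = (\<Sum>\<sigma>\<in>Perms (Suc m). u + u * (\<Sum>q = 1..Suc m. u ^ chi (Suc m) \<sigma> q))"
    by (intro sum.cong refl) (simp add: sum_distrib_left distrib_left)
  also have "\<dots> = fact (Suc m) * u + u * (\<Sum>q = 1..Suc m. chi_gf (Suc m) q u)"
    unfolding chi_gf_def sum.distrib sum_distrib_left[symmetric]
    by (simp add: card_Perms sum.swap[of _ "Perms (Suc m)"] algebra_simps del: sum.cl_ivl_Suc)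
  finally show ?thesis .
qed

lemma phi_Suc_0: "phi (Suc 0) p u = u"
  by (simp add: phi_eq_chi_gf chi_gf_def card_Perms)

lemma phi_Suc_off_diag:
  assumes "1 \<le> p" "p \<le> n"
  shows "real (Suc n) * phi (Suc n) p u = u + real n * phi n p u"
proof -
  obtain m where n: "n = Suc m"
    using assms by (cases n) auto
  have "real (Suc (Suc m)) * phi (Suc (Suc m)) p u = chi_gf (Suc (Suc m)) p u / fact (Suc m)"
    unfolding phi_eq_chi_gf by (simp del: of_nat_Suc)
  also have "\<dots> = u + real (Suc m) * phi (Suc m) p u"
    unfolding n phi_eq_chi_gf chi_gf_Suc_Suc_off_diag[OF assms[unfolded n]]
    by (simp add: field_simps del: of_nat_Suc fact_Suc)
  finally show ?thesis
    unfolding n .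
qed

lemma phi_off_diag:
  assumes "1 \<le> p" "p \<le> n"
  shows "real n * phi n p u = real p * phi p p u + real (n - p) * u"
  using assms(2)
proof (induction n rule: dec_induct)
  case base
  show ?case by simp
next
  case (step n)
  have "real (Suc n) * phi (Suc n) p u = u + real n * phi n p u"
    using assms(1) step.hyps(1) by (rule phi_Suc_off_diag)
  also have "\<dots> = real p * phi p p u + real (Suc n - p) * u"
    unfolding step.IH using step.hyps(1) by (simp add: Suc_diff_le algebra_simps)
  finally show ?case .
qed

lemma phi_diag:
  assumes "2 \<le> n"
  shows "real n * phi n n u = u * (1 + (\<Sum>p = 1..n - 1. phi (n - 1) p u))"
proof -
  obtain m where n: "n = Suc (Suc m)"
    using assms by (metis add_2_eq_Suc le_Suc_ex)
  have "real (Suc (Suc m)) * phi (Suc (Suc m)) (Suc (Suc m)) u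
      = chi_gf (Suc (Suc m)) (Suc (Suc m)) u / fact (Suc m)"
    unfolding phi_eq_chi_gf by (simp del: of_nat_Suc)
  also have "\<dots> = u * (1 + (\<Sum>p = 1..Suc m. phi (Suc m) p u))"
    unfolding chi_gf_Suc_Suc_diag phi_eq_chi_gf
    by (simp add: field_simps sum_divide_distrib[symmetric] del: of_nat_Suc fact_Suc)
  finally show ?thesis
    unfolding n by simp
qed

lemma sum_pochhammer_div_fact:
  fixes u :: "'a :: field_char_0"
  shows "(\<Sum>k\<le>m. pochhammer u k / fact k) = pochhammer (u + 1) m / fact m"
proof (induction m)
  case 0
  show ?case by simp
next
  case (Suc m)
  have "pochhammer (u + 1) m / fact m + pochhammer u (Suc m) / fact (Suc m)
      = pochhammer (u + 1) m * (of_nat (Suc m) + u) / fact (Suc m)"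
    by (simp add: pochhammer_rec field_simps del: of_nat_Suc)
  also have "\<dots> = pochhammer (u + 1) (Suc m) / fact (Suc m)"
    by (simp add: pochhammer_Suc algebra_simps)
  finally show ?case
    using Suc.IH by simp
qed

lemma sum_closed_form_row:
  fixes u A :: real
  shows "(\<Sum>p = 1..Suc k. real (Suc k - p + 1) * u + real p * A * (1 - pochhammer u (p - 1) / fact p))
     = real (Suc k) * real (Suc (Suc k)) / 2 * (u + A) - A * pochhammer (u + 1) k / fact k"
proof -
  have gauss: "(\<Sum>p = 1..Suc k. real p) = real (Suc k) * real (Suc (Suc k)) / 2"
    using double_gauss_sum_from_Suc_0[of "Suc k", where 'a = real] by simp
  have "(\<Sum>p = 1..Suc k. real p * (pochhammer u (p - 1) / fact p))
      = (\<Sum>j<Suc k. pochhammer u j / fact j)"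
    unfolding One_nat_def sum.atLeast1_atMost_eq by (intro sum.cong refl) (simp del: of_nat_Suc)
  also have "\<dots> = pochhammer (u + 1) k / fact k"
    by (simp only: lessThan_Suc_atMost sum_pochhammer_div_fact)
  finally have hockey_stick: "(\<Sum>p = 1..Suc k. real p * (pochhammer u (p - 1) / fact p))
      = pochhammer (u + 1) k / fact k" .
  have "(\<Sum>p = 1..Suc k. real (Suc k - p + 1) * u + real p * A * (1 - pochhammer u (p - 1) / fact p))
      = (\<Sum>p = 1..Suc k. (real (Suc (Suc k)) * u - real p * (u - A))
          - A * (real p * (pochhammer u (p - 1) / fact p)))"
    by (intro sum.cong refl) (auto simp: of_nat_diff algebra_simps)
  also have "\<dots> = real (Suc k) * real (Suc (Suc k)) / 2 * (u + A) - A * pochhammer (u + 1) k / fact k"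
    unfolding sum_subtractf sum_distrib_left[symmetric] sum_distrib_right[symmetric] gauss hockey_stick
    by (simp add: field_simps)
  finally show ?thesis .
qed

lemma phi_closed_form:
  fixes u :: real
  defines "A \<equiv> u\<^sup>2 / (2 - u)"
  assumes "u \<noteq> 2" "1 \<le> p" "p \<le> n"
  shows "real n * phi n p u = real (n - p + 1) * u + real p * A * (1 - pochhammer u (p - 1) / fact p)"
  using assms(3,4)
proof (induction n arbitrary: p rule: less_induct)
  case (less n)
  consider "p < n" | "p = 1" "n = 1" | k where "p = n" "n = Suc (Suc k)"
    using less.prems by (metis One_nat_def le_antisym le_neq_implies_less not0_implies_Suc not_one_le_zero)
  then show ?case
  proof cases
    case 1
    have "real n * phi n p u = real p * phi p p u + real (n - p) * u"
      using less.prems by (rule phi_off_diag)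
    also have "real p * phi p p u = u + real p * A * (1 - pochhammer u (p - 1) / fact p)"
      using less.IH[of p p] 1 less.prems by simp
    finally show ?thesis
      using 1 by (simp add: of_nat_diff algebra_simps)
  next
    case 2
    then show ?thesis
      by (simp add: phi_Suc_0)
  next
    case 3
    let ?m = "Suc k"
    have row: "real ?m * phi ?m q u
        = real (?m - q + 1) * u + real q * A * (1 - pochhammer u (q - 1) / fact q)"
      if "q \<in> {1..?m}" for q
      using less.IH[of ?m q] that 3 by simp
    have "real ?m * (\<Sum>q = 1..?m. phi ?m q u)
        = (\<Sum>q = 1..?m. real (?m - q + 1) * u + real q * A * (1 - pochhammer u (q - 1) / fact q))"
      unfolding sum_distrib_left using row by (rule sum.cong[OF refl])
    also have "\<dots> = real ?m * real n / 2 * (u + A) - A * pochhammer (u + 1) k / fact k"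
      unfolding sum_closed_form_row 3 ..
    finally have row_sum: "(\<Sum>q = 1..?m. phi ?m q u)
        = real n / 2 * (u + A) - A * pochhammer (u + 1) k / (real ?m * fact k)"
      by (simp add: field_simps del: of_nat_Suc)
    have A_eq: "u * (u + A) = 2 * A"
      using assms(2) unfolding A_def by (simp add: field_simps power2_eq_square)
    have "real n * phi n n u = u * (1 + (\<Sum>q = 1..?m. phi ?m q u))"
      using phi_diag[of n] 3 by simp
    also have "\<dots> = u + real n / 2 * (u * (u + A)) - A * (u * pochhammer (u + 1) k) / (real ?m * fact k)"
      unfolding row_sum by (simp add: algebra_simps)
    also have "\<dots> = u + real n * A - A * pochhammer u ?m / (real ?m * fact k)"
      unfolding A_eq pochhammer_rec by simp
    also have "\<dots> = u + real n * A * (1 - pochhammer u (n - 1) / fact n)"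
      unfolding 3 by (simp add: field_simps del: of_nat_Suc)
    finally show ?thesis
      using 3 by simp
  qed
qed

theorem mainTheorem6:
  fixes u :: real
  shows "(\<forall>n p. 1 \<le> p \<and> p \<le> n \<longrightarrow>
            phi n p u = real p / real n * phi p p u + (1 - real p / real n) * u)
       \<and> (\<forall>n. 2 \<le> n \<longrightarrow>
            phi n n u = u / real n * (1 + (\<Sum>p = 1..n - 1. phi (n - 1) p u)))
       \<and> (u \<noteq> 2 \<longrightarrow> (\<forall>n p. 1 \<le> p \<and> p \<le> n \<longrightarrow>
            phi n p u = real (n - p + 1) / real n * u
              + real p / real n * (u ^ 2 / (2 - u)) * (1 - pochhammer u (p - 1) / fact p)))"
proof (intro conjI allI impI)
  fix n p :: nat
  assume "1 \<le> p \<and> p \<le> n"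
  then show "phi n p u = real p / real n * phi p p u + (1 - real p / real n) * u"
    using phi_off_diag[of p n u] by (simp add: field_simps of_nat_diff)
next
  fix n :: nat
  assume "2 \<le> n"
  then show "phi n n u = u / real n * (1 + (\<Sum>p = 1..n - 1. phi (n - 1) p u))"
    using phi_diag[of n u] by (simp add: field_simps)
next
  fix n p :: nat
  assume "u \<noteq> 2" "1 \<le> p \<and> p \<le> n"
  define A where "A = u ^ 2 / (2 - u)"
  define c where "c = 1 - pochhammer u (p - 1) / fact p"
  have "real n * phi n p u = real (n - p + 1) * u + real p * A * c"
    unfolding A_def c_def using phi_closed_form \<open>u \<noteq> 2\<close> \<open>1 \<le> p \<and> p \<le> n\<close> by blast
  moreover have "real n \<noteq> 0"
    using \<open>1 \<le> p \<and> p \<le> n\<close> by simp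
  ultimately have "phi n p u = real (n - p + 1) / real n * u + real p / real n * A * c"
    by (simp add: field_simps)
  then show "phi n p u = real (n - p + 1) / real n * u
      + real p / real n * (u ^ 2 / (2 - u)) * (1 - pochhammer u (p - 1) / fact p)"
    unfolding A_def c_def .
qed

end
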